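(* Suppose Assumptions A1 and A2 hold. Then for all $k_1,k_2\in\{0,1,2,\dots\}$: 1. For $i\in\mathcal{D}$: $$\mathbb{E}\{d_i(k_1)d_i(k_2)\}=\delta(k_1-k_2)\,\alpha_i^2p_i(1-p_i)\,\mathbb{E}\{u^2(k_1-i)\}.$$ 2. For $i_1\neq i_2$ in $\mathcal{D}$: $$\mathbb{E}\{d_{i_1}(k_1)d_{i_2}(k_2)\}=-\delta(k_1-i_1-k_2+i_2)\,\alpha_{i_1}\alpha_{i_2}p_{i_1}p_{i_2}\,\mathbb{E}\{u^2(k_1-i_1)\}.$$
   Context: Setting. Fix $\bar\tau\ge1$ and $\mathcal{D}=\{0,\dots,\bar\tau\}$. A networked feedback system has a SISO discrete-time LTI plant $P$ with strictly proper transfer function and a SISO LTI controller $K$ with proper transfer function. The system is at rest at time $0$, so $u(n)=0$ and $v(n)=0$ for $n<0$. The plant input is $v(k)+u_d(k)$, where $v$ is the external input, and $u=Ky$ with $y$ the plant output. The receiver output is $$u_d(k)=\sum_{i=0}^{\bar\tau}\alpha_i\delta(\tau_{k-i}-i)u(k-i),$$ with fixed real weights $\alpha_i$ and Kronecker delta $\delta$. Assumptions. - A1: $\{\tau_n\}$ is i.i.d. on $\mathcal{D}$ with $\Pr\{\tau_n=i\}=p_i$, $\sum_ip_i=1$. Here it is indexed by all integers; negative-index delays only multiply $u(n)=0$ and do not affect the system. - A2: $\{v(k)\}$ is independent of $\{\tau_n\}$. Definitions. $\omega(k,n)=\alpha_i[\delta(\tau_n-i)-p_i]$ if $k=n+i$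 with $i\in\mathcal{D}$, and $\omega(k,n)=0$ otherwise. Set $d_i(k)=\omega(k,k-i)\,u(k-i)$ for $i\in\mathcal{D}$. *)

theory Defs
  imports "HOL-Probability.Probability"
begin

definition kdelta :: "int \<Rightarrow> real" where
  "kdelta m = (if m = 0 then 1 else 0)"

definition omega :: "(nat \<Rightarrow> real) \<Rightarrow> (nat \<Rightarrow> real) \<Rightarrow> nat \<Rightarrow> (int \<Rightarrow> 'a \<Rightarrow> nat)
    \<Rightarrow> int \<Rightarrow> int \<Rightarrow> 'a \<Rightarrow> real" where
  "omega \<alpha> p \<tau>bar \<tau> k n x =
     (if 0 \<le> k - n \<and> k - n \<le> int \<tau>bar
      then \<alpha> (nat (k - n)) * (kdelta (int (\<tau> n x) - (k - n)) - p (nat (k - n)))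
      else 0)"

definition dsig :: "(nat \<Rightarrow> real) \<Rightarrow> (nat \<Rightarrow> real) \<Rightarrow> nat \<Rightarrow> (int \<Rightarrow> 'a \<Rightarrow> nat)
    \<Rightarrow> (int \<Rightarrow> 'a \<Rightarrow> real) \<Rightarrow> nat \<Rightarrow> int \<Rightarrow> 'a \<Rightarrow> real" where
  "dsig \<alpha> p \<tau>bar \<tau> u i k x = omega \<alpha> p \<tau>bar \<tau> k (k - int i) x * u (k - int i) x"

definition gen_events :: "'a measure \<Rightarrow> ('i \<Rightarrow> 'a \<Rightarrow> 'b) \<Rightarrow> ('i \<Rightarrow> 'b measure) \<Rightarrow> 'a set set" where
  "gen_events M X N = sigma_sets (space M) (\<Union>n. {X n -` A \<inter> space M | A. A \<in> sets (N n)})"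

end

theory Submission
  imports Defs
begin

(* Write e_i(n) = \<delta>(\<tau>_n - i) - p_i, so that d_i(k) = \<alpha>_i e_i(k - i) u(k - i), and let F_n be the
   \<sigma>-algebra generated by the delays \<tau>_m, m < n, and the whole input v. By A1 and A2, \<tau>_n is
   independent of F_n, and the loop equations show by induction on time that u(n) is
   F_n-measurable and square integrable. With n_1 = k_1 - i_1 and n_2 = k_2 - i_2: if n_1 < n_2, every
   factor of d_i1(k_1) d_i2(k_2) except e_i2(n_2) is F_n2-measurable, so the expectation factors and
   vanishes because e_i(n) is centred; if n_1 = n_2 = n, it factors as E[e_i1(n) e_i2(n)] E[u(n)^2],
   and the first factor is the covariance of the indicators of {\<tau>_n = i_1} and {\<tau>_n = i_2}. *)

lemma (in prob_space) indep_sets_extend_by_indep_set: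
  fixes E :: "'i \<Rightarrow> 'a set set" and C :: "'a set set"
  assumes indep_E: "indep_sets E I"
    and indep_C: "indep_set (sigma_sets (space M) (\<Union>i\<in>I. E i)) C"
  shows "indep_sets (case_option C E) (insert None (Some ` I))"
proof (rule indep_setsI)
  have "E i \<subseteq> events" if "i \<in> I" for i
    using indep_E that unfolding indep_sets_def by blast
  then show "case_option C E j \<subseteq> events" if "j \<in> insert None (Some ` I)" for j
    using that indep_setD_ev2[OF indep_C] by (cases j) auto
next
  fix A J assume J: "J \<noteq> {}" "J \<subseteq> insert None (Some ` I)" "finite J"
    and A: "\<forall>j\<in>J. A j \<in> case_option C E j"
  define K where "K = Some -` J"
  have K: "K \<subseteq> I" "finite K" and J_eq: "J - {None} = Some ` K"
    using J by (auto simp: K_def finite_vimageI)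
  have A_Some: "A (Some k) \<in> E k" if "k \<in> K" for k
    using A that by (force simp: K_def)
  have prob_K: "prob (\<Inter>k\<in>K. A (Some k)) = (\<Prod>k\<in>K. prob (A (Some k)))" if "K \<noteq> {}"
    using A_Some by (intro indep_setsD[OF indep_E K(1) that K(2)]) blast
  show "prob (\<Inter>j\<in>J. A j) = (\<Prod>j\<in>J. prob (A j))"
  proof (cases "None \<in> J")
    case False
    then have "J = Some ` K" using J_eq by blast
    then show ?thesis using prob_K J(1) by (simp add: prod.reindex)
  next
    case True
    then have J_None: "J = insert None (Some ` K)" using J_eq by blast
    show ?thesis
    proof (cases "K = {}")
      case True
      then show ?thesis by (simp add: J_None)
    next
      case False
      interpret S: sigma_algebra "space M" "sigma_sets (space M) (\<Union>i\<in>I. E i)"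
        using indep_E sets.sets_into_space unfolding indep_sets_def
        by (intro sigma_algebra_sigma_sets) blast
      have past: "(\<Inter>k\<in>K. A (Some k)) \<in> sigma_sets (space M) (\<Union>i\<in>I. E i)"
        using A_Some K False by (intro S.finite_INT sigma_sets.Basic) auto
      have "prob (\<Inter>j\<in>J. A j) = prob (\<Inter>k\<in>K. A (Some k)) * prob (A None)"
        using indep_setD[OF indep_C past, of "A None"] A J_None by (simp add: Int_commute)
      also have "\<dots> = (\<Prod>j\<in>J. prob (A j))"
        using prob_K[OF False] K(2) by (simp add: J_None prod.reindex)
      finally show ?thesis .
    qed
  qed
qed

lemma (in prob_space) integral_mult_indep_subalgebras:
  fixes X Y :: "'a \<Rightarrow> real"
  assumes indep: "indep_set (sets A) (sets B)"
    and sub: "subalgebra M A" "subalgebra M B"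
    and meas: "X \<in> borel_measurable A" "Y \<in> borel_measurable B"
    and "integrable M X" "integrable M Y"
  shows "(\<integral>x. X x * Y x \<partial>M) = (\<integral>x. X x \<partial>M) * (\<integral>x. Y x \<partial>M)"
proof (rule indep_var_lebesgue_integral)
  have generated: "sigma_sets (space M) {f -` S \<inter> space M | S. S \<in> sets borel} \<subseteq> sets F"
    if "subalgebra M F" "f \<in> borel_measurable F" for f :: "'a \<Rightarrow> real" and F
    using that measurable_sets[OF that(2)] sets.top[of F] unfolding subalgebra_def
    by (intro sets.sigma_sets_subset') auto
  have "indep_set (sigma_sets (space M) {X -` S \<inter> space M | S. S \<in> sets borel})
      (sigma_sets (space M) {Y -` S \<inter> space M | S. S \<in> sets borel})"
    using generated[OF sub(1) meas(1)] generated[OF sub(2) meas(2)] unfolding indep_set_def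
    by (intro indep_sets_mono_sets[OF indep[unfolded indep_set_def]]) (auto split: bool.split)
  then show "indep_var borel X borel Y"
    using measurable_from_subalg[OF sub(1) meas(1)] measurable_from_subalg[OF sub(2) meas(2)]
    by (simp add: indep_var_eq)
qed fact+

definition L2_in :: "'a measure \<Rightarrow> 'a measure \<Rightarrow> ('a \<Rightarrow> real) \<Rightarrow> bool" where
  "L2_in M F f \<longleftrightarrow> f \<in> borel_measurable F \<and> integrable M (\<lambda>x. (f x)\<^sup>2)"

lemma L2_in_zero: "L2_in M F (\<lambda>_. 0)"
  by (simp add: L2_in_def)

lemma L2_in_subalgebra: "subalgebra F' F \<Longrightarrow> L2_in M F f \<Longrightarrow> L2_in M F' f"
  by (auto simp: L2_in_def intro: measurable_from_subalg)

lemma L2_in_borel_measurable: "subalgebra M F \<Longrightarrow> L2_in M F f \<Longrightarrow> f \<in> borel_measurable M"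
  by (auto simp: L2_in_def intro: measurable_from_subalg)

lemma L2_in_add:
  assumes sub: "subalgebra M F" and f: "L2_in M F f" and g: "L2_in M F g"
  shows "L2_in M F (\<lambda>x. f x + g x)"
proof -
  have "integrable M (\<lambda>x. (f x + g x)\<^sup>2)"
  proof (rule Bochner_Integration.integrable_bound)
    show "integrable M (\<lambda>x. 2 * (f x)\<^sup>2 + 2 * (g x)\<^sup>2)"
      using f g by (simp add: L2_in_def)
    show "(\<lambda>x. (f x + g x)\<^sup>2) \<in> borel_measurable M"
      using L2_in_borel_measurable[OF sub f] L2_in_borel_measurable[OF sub g] by simp
    have "(a + b)\<^sup>2 \<le> 2 * a\<^sup>2 + 2 * b\<^sup>2" for a b :: real
      using sum_squares_bound[of a b] by (simp add: power2_sum)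
    then show "AE x in M. norm ((f x + g x)\<^sup>2) \<le> norm (2 * (f x)\<^sup>2 + 2 * (g x)\<^sup>2)"
      by simp
  qed
  with f g show ?thesis by (auto simp: L2_in_def)
qed

lemma L2_in_sum:
  "subalgebra M F \<Longrightarrow> (\<And>i. i \<in> S \<Longrightarrow> L2_in M F (f i)) \<Longrightarrow> L2_in M F (\<lambda>x. \<Sum>i\<in>S. f i x)"
  by (induction S rule: infinite_finite_induct) (simp_all add: L2_in_zero L2_in_add)

lemma L2_in_bounded_mult:
  assumes sub: "subalgebra M F" and h: "h \<in> borel_measurable F" "\<And>x. \<bar>h x\<bar> \<le> B"
    and f: "L2_in M F f"
  shows "L2_in M F (\<lambda>x. h x * f x)"
proof -
  have "integrable M (\<lambda>x. (h x * f x)\<^sup>2)"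
  proof (rule Bochner_Integration.integrable_bound)
    show "integrable M (\<lambda>x. B\<^sup>2 * (f x)\<^sup>2)"
      using f by (simp add: L2_in_def)
    show "(\<lambda>x. (h x * f x)\<^sup>2) \<in> borel_measurable M"
      using measurable_from_subalg[OF sub h(1)] L2_in_borel_measurable[OF sub f] by simp
    have "(h x)\<^sup>2 \<le> B\<^sup>2" for x
      using h(2)[of x] abs_le_square_iff by fastforce
    then show "AE x in M. norm ((h x * f x)\<^sup>2) \<le> norm (B\<^sup>2 * (f x)\<^sup>2)"
      by (simp add: power_mult_distrib mult_right_mono)
  qed
  with h(1) f show ?thesis by (auto simp: L2_in_def)
qed

lemma L2_in_cmult: "subalgebra M F \<Longrightarrow> L2_in M F f \<Longrightarrow> L2_in M F (\<lambda>x. c * f x)"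
  by (rule L2_in_bounded_mult[where B = "\<bar>c\<bar>"]) auto

lemma integrable_mult_L2_in:
  assumes sub: "subalgebra M F" and f: "L2_in M F f" and g: "L2_in M F g"
  shows "integrable M (\<lambda>x. f x * g x)"
proof (rule Bochner_Integration.integrable_bound)
  show "integrable M (\<lambda>x. (f x)\<^sup>2 + (g x)\<^sup>2)"
    using f g by (simp add: L2_in_def)
  show "(\<lambda>x. f x * g x) \<in> borel_measurable M"
    using L2_in_borel_measurable[OF sub f] L2_in_borel_measurable[OF sub g] by simp
  have "\<bar>a * b\<bar> \<le> a\<^sup>2 + b\<^sup>2" for a b :: real
  proof -
    have "\<bar>a * b\<bar> \<le> 2 * \<bar>a\<bar> * \<bar>b\<bar>" by (simp add: abs_mult)
    then show ?thesis using sum_squares_bound[of "\<bar>a\<bar>" "\<bar>b\<bar>"] by simp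
  qed
  then show "AE x in M. norm (f x * g x) \<le> norm ((f x)\<^sup>2 + (g x)\<^sup>2)"
    by simp
qed

lemma kdelta_bounded: "\<bar>kdelta z - c\<bar> \<le> 1 + \<bar>c\<bar>"
  by (simp add: kdelta_def abs_if)

lemma (in prob_space) expectation_kdelta:
  assumes "T \<in> measurable M (count_space UNIV)"
  shows "(\<integral>x. kdelta (int (T x) - int i) \<partial>M) = prob {x \<in> space M. T x = i}"
proof -
  have "(\<lambda>x. kdelta (int (T x) - int i)) = indicator {x. T x = i}"
    by (auto simp: kdelta_def indicator_def)
  moreover have "{x. T x = i} \<inter> space M = {x \<in> space M. T x = i}"
    by blast
  ultimately show ?thesis
    by simp
qed

lemma (in prob_space) integrable_kdelta:
  "T \<in> measurable M (count_space UNIV) \<Longrightarrow> integrable M (\<lambda>x. kdelta (int (T x) - int i))"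
  by (intro integrable_const_bound[where B = 1]) (auto simp: kdelta_def)

lemma (in prob_space) expectation_centered_kdelta:
  assumes "T \<in> measurable M (count_space UNIV)" and "prob {x \<in> space M. T x = i} = a"
  shows "(\<integral>x. kdelta (int (T x) - int i) - a \<partial>M) = 0"
  using assms expectation_kdelta integrable_kdelta by (simp add: prob_space)

lemma (in prob_space) covariance_kdelta:
  assumes T: "T \<in> measurable M (count_space UNIV)"
    and a: "prob {x \<in> space M. T x = i} = a" and b: "prob {x \<in> space M. T x = j} = b"
  shows "(\<integral>x. (kdelta (int (T x) - int i) - a) * (kdelta (int (T x) - int j) - b) \<partial>M)
    = (if i = j then a * (1 - a) else - a * b)"
proof -
  let ?\<delta> = "\<lambda>k x. kdelta (int (T x) - int k)"
  define c :: real where "c = (if i = j then 1 else 0)"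
  have "(\<integral>x. (?\<delta> i x - a) * (?\<delta> j x - b) \<partial>M)
      = (\<integral>x. c * ?\<delta> i x - b * ?\<delta> i x - a * ?\<delta> j x + a * b \<partial>M)"
    by (intro Bochner_Integration.integral_cong) (auto simp: c_def kdelta_def algebra_simps)
  also have "\<dots> = c * a - b * a - a * b + a * b"
    using expectation_kdelta[OF T] integrable_kdelta[OF T] a b by (simp add: prob_space)
  finally show ?thesis
    using a b by (auto simp: c_def algebra_simps)
qed

locale delays_indep_input = prob_space M for M :: "'a measure" +
  fixes \<tau> :: "int \<Rightarrow> 'a \<Rightarrow> nat" and v :: "int \<Rightarrow> 'a \<Rightarrow> real"
  assumes indep_delays: "indep_vars (\<lambda>_. count_space UNIV) \<tau> UNIV"
    and input_indep_delays:
      "indep_set (gen_events M \<tau> (\<lambda>_. count_space UNIV)) (gen_events M v (\<lambda>_. borel))"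
begin

abbreviation delay_algebra :: "int \<Rightarrow> 'a measure" where
  "delay_algebra n \<equiv> vimage_algebra (space M) (\<tau> n) (count_space UNIV)"

abbreviation input_events :: "'a set set" where
  "input_events \<equiv> gen_events M v (\<lambda>_. borel)"

text \<open>\<open>past n\<close> contains the whole input \<open>v\<close>, future values included: by A2 all of \<open>v\<close> is
  independent of the delays, and with it every loop signal at time \<open>n\<close> becomes measurable.\<close>
definition past :: "int \<Rightarrow> 'a measure" where
  "past n = sigma (space M) (input_events \<union> (\<Union>m<n. sets (delay_algebra m)))"

lemma delay_measurable: "\<tau> n \<in> measurable M (count_space UNIV)"
  using indep_delays by (simp add: indep_vars_def2)

lemma sets_delay_algebra: "sets (delay_algebra n) = {\<tau> n -` A \<inter> space M | A. A \<in> sets (count_space UNIV)}"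
  by (simp add: sets_vimage_algebra2)

lemma subalgebra_delay_algebra: "subalgebra M (delay_algebra n)"
  using sets_image_in_sets[OF refl delay_measurable] by (simp add: subalgebra_def)

lemma past_generators_events: "input_events \<union> (\<Union>m<n. sets (delay_algebra m)) \<subseteq> events"
  using indep_setD_ev2[OF input_indep_delays] subalgebra_delay_algebra
  by (auto simp: subalgebra_def)

lemma space_past [simp]: "space (past n) = space M"
  using past_generators_events sets.sets_into_space
  unfolding past_def by (intro space_measure_of) blast

lemma sets_past: "sets (past n) = sigma_sets (space M) (input_events \<union> (\<Union>m<n. sets (delay_algebra m)))"
  using past_generators_events sets.sets_into_space
  unfolding past_def by (intro sets_measure_of) blast

lemma subalgebra_past: "subalgebra M (past n)"
  using past_generators_events by (simp add: subalgebra_def sets_past sets.sigma_sets_subset)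

lemma subalgebra_past_mono: "n \<le> n' \<Longrightarrow> subalgebra (past n') (past n)"
  unfolding subalgebra_def sets_past by (auto intro!: sigma_sets_mono')

lemma delay_measurable_past: "m < n \<Longrightarrow> \<tau> m \<in> measurable (past n) (count_space UNIV)"
  by (rule measurableI) (auto simp: sets_past sets_delay_algebra intro!: sigma_sets.Basic)

lemma input_measurable_past: "v m \<in> borel_measurable (past n)"
  by (rule measurableI) (auto simp: sets_past gen_events_def intro!: sigma_sets.Basic)

lemma indep_delay_past: "indep_set (sets (delay_algebra n)) (sets (past n))"
proof -
  (* With None indexing the input, delays and input form one independent family; it is split into
     the present delay and everything in the past. *)
  let ?E = "case_option input_events (\<lambda>m. sets (delay_algebra m))"
  let ?I = "\<lambda>now. if now then {Some n} else insert None (Some ` {..<n})"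
  have "indep_sets (\<lambda>m. sets (delay_algebra m)) UNIV"
    using indep_delays by (simp add: indep_vars_def2 sets_delay_algebra)
  moreover have "gen_events M \<tau> (\<lambda>_. count_space UNIV)
      = sigma_sets (space M) (\<Union>m. sets (delay_algebra m))"
    by (simp add: gen_events_def sets_delay_algebra)
  ultimately have "indep_sets ?E (insert None (range Some))"
    using input_indep_delays by (intro indep_sets_extend_by_indep_set) auto
  then have "indep_sets ?E (\<Union>now. ?I now)"
    by (rule indep_sets_mono_index[rotated]) auto
  moreover have "Int_stable (?E i)" for i
  proof (cases i)
    case None
    interpret sigma_algebra "space M" input_events
      unfolding gen_events_def by (intro sigma_algebra_sigma_sets) auto
    from None show ?thesis by (simp add: Int_stable)
  qed (simp add: sets.Int_stable)
  ultimately have "indep_sets (\<lambda>now. sigma_sets (space M) (\<Union>i\<in>?I now. ?E i)) UNIV"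
    by (intro indep_sets_collect_sigma) (auto simp: disjoint_family_on_def)
  moreover have "sigma_sets (space M) (\<Union>i\<in>?I now. ?E i)
      = (if now then sets (delay_algebra n) else sets (past n))" for now
    using sets.sigma_sets_eq[of "delay_algebra n"] by (auto simp: sets_past)
  ultimately show ?thesis
    unfolding indep_set_def by (simp add: case_bool_if)
qed

lemma integral_delay_mult_past:
  fixes h :: "nat \<Rightarrow> real"
  assumes h: "\<And>t. \<bar>h t\<bar> \<le> B" and Y: "Y \<in> borel_measurable (past n)" "integrable M Y"
  shows "(\<integral>x. h (\<tau> n x) * Y x \<partial>M) = (\<integral>x. h (\<tau> n x) \<partial>M) * integral\<^sup>L M Y"
proof (rule integral_mult_indep_subalgebras[OF indep_delay_past subalgebra_delay_algebra subalgebra_past])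
  show "(\<lambda>x. h (\<tau> n x)) \<in> borel_measurable (delay_algebra n)"
    by (rule measurable_compose[OF measurable_vimage_algebra1]) auto
  show "integrable M (\<lambda>x. h (\<tau> n x))"
    using h delay_measurable by (intro integrable_const_bound[where B = B]) auto
qed fact+

end

locale networked_loop = delays_indep_input M \<tau> v
  for M :: "'a measure" and \<tau> :: "int \<Rightarrow> 'a \<Rightarrow> nat" and v :: "int \<Rightarrow> 'a \<Rightarrow> real" +
  fixes \<tau>bar :: nat and \<alpha> p :: "nat \<Rightarrow> real" and u y ud :: "int \<Rightarrow> 'a \<Rightarrow> real"
    and nP nK :: nat and aP bP aK bK :: "nat \<Rightarrow> real"
  assumes delay_distribution: "\<And>n i. i \<le> \<tau>bar \<Longrightarrow> prob {x \<in> space M. \<tau> n x = i} = p i"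
    and input_square_integrable: "\<And>n. integrable M (\<lambda>x. (v n x)\<^sup>2)"
    and u_rest: "\<And>n x. n < 0 \<Longrightarrow> u n x = 0"
    and y_rest: "\<And>n x. n < 0 \<Longrightarrow> y n x = 0"
    and receiver: "\<And>k x. ud k x =
        (\<Sum>i\<le>\<tau>bar. \<alpha> i * kdelta (int (\<tau> (k - int i) x) - int i) * u (k - int i) x)"
    and plant: "\<And>k x. 0 \<le> k \<Longrightarrow> y k x =
        (\<Sum>j\<in>{1..nP}. aP j * y (k - int j) x)
        + (\<Sum>j\<in>{1..nP}. bP j * (v (k - int j) x + ud (k - int j) x))"
    and controller: "\<And>k x. 0 \<le> k \<Longrightarrow> u k x =
        (\<Sum>j\<in>{1..nK}. aK j * u (k - int j) x)
        + (\<Sum>j\<le>nK. bK j * y (k - int j) x)"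
begin

lemma input_L2_past: "L2_in M (past n) (v m)"
  using input_measurable_past input_square_integrable by (simp add: L2_in_def)

lemma receiver_L2_past:
  assumes u: "\<And>l. l < n \<Longrightarrow> L2_in M (past n) (u l)" and "m < n"
  shows "L2_in M (past n) (ud m)"
proof -
  have "L2_in M (past n) (\<lambda>x. (\<alpha> i * kdelta (int (\<tau> (m - int i) x) - int i)) * u (m - int i) x)" for i
  proof (rule L2_in_bounded_mult[OF subalgebra_past])
    show "(\<lambda>x. \<alpha> i * kdelta (int (\<tau> (m - int i) x) - int i)) \<in> borel_measurable (past n)"
      using delay_measurable_past[of "m - int i" n] \<open>m < n\<close> by simp
    show "\<bar>\<alpha> i * kdelta (int (\<tau> (m - int i) x) - int i)\<bar> \<le> \<bar>\<alpha> i\<bar>" for x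
      by (simp add: kdelta_def)
    show "L2_in M (past n) (u (m - int i))"
      using u \<open>m < n\<close> by simp
  qed
  then have "L2_in M (past n)
      (\<lambda>x. \<Sum>i\<le>\<tau>bar. \<alpha> i * kdelta (int (\<tau> (m - int i) x) - int i) * u (m - int i) x)"
    by (intro L2_in_sum[OF subalgebra_past])
  then show ?thesis
    by (simp add: receiver[abs_def])
qed

lemma plant_L2_past:
  assumes u: "\<And>l. l < n \<Longrightarrow> L2_in M (past n) (u l)"
    and y: "\<And>l. l < n \<Longrightarrow> L2_in M (past n) (y l)"
    and "0 \<le> n"
  shows "L2_in M (past n) (y n)"
proof -
  have "L2_in M (past n) (\<lambda>x. (\<Sum>j\<in>{1..nP}. aP j * y (n - int j) x)
      + (\<Sum>j\<in>{1..nP}. bP j * (v (n - int j) x + ud (n - int j) x)))"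
    using u y receiver_L2_past input_L2_past
    by (intro L2_in_add L2_in_sum L2_in_cmult subalgebra_past) auto
  then show ?thesis
    by (simp only: ext[OF plant[OF \<open>0 \<le> n\<close>]])
qed

lemma controller_L2_past:
  assumes u: "\<And>l. l < n \<Longrightarrow> L2_in M (past n) (u l)"
    and y: "\<And>l. l \<le> n \<Longrightarrow> L2_in M (past n) (y l)"
    and "0 \<le> n"
  shows "L2_in M (past n) (u n)"
proof -
  have "L2_in M (past n)
      (\<lambda>x. (\<Sum>j\<in>{1..nK}. aK j * u (n - int j) x) + (\<Sum>j\<le>nK. bK j * y (n - int j) x))"
    using u y by (intro L2_in_add L2_in_sum L2_in_cmult subalgebra_past) auto
  then show ?thesis
    by (simp only: ext[OF controller[OF \<open>0 \<le> n\<close>]])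
qed

lemma closed_loop_L2_past: "L2_in M (past n) (y n) \<and> L2_in M (past n) (u n)"
proof (induction "nat (n + 1)" arbitrary: n rule: less_induct)
  case less
  show ?case
  proof (cases "n < 0")
    case True
    then have "y n = (\<lambda>_. 0)" "u n = (\<lambda>_. 0)"
      by (auto simp: u_rest y_rest)
    then show ?thesis
      by (simp add: L2_in_zero)
  next
    case False
    have earlier: "L2_in M (past n) (y l) \<and> L2_in M (past n) (u l)" if "l < n" for l
      using less[of l] that False L2_in_subalgebra[OF subalgebra_past_mono[of l n]] by auto
    then have "L2_in M (past n) (y n)"
      using False by (intro plant_L2_past) auto
    moreover have "L2_in M (past n) (u n)"
      using earlier \<open>L2_in M (past n) (y n)\<close> False
      by (intro controller_L2_past) (auto simp: order_le_less)
    ultimately show ?thesis ..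
  qed
qed

lemma control_L2_past: "L2_in M (past n) (u n)"
  using closed_loop_L2_past by blast

lemma dsig_eq:
  "i \<le> \<tau>bar \<Longrightarrow>
    dsig \<alpha> p \<tau>bar \<tau> u i k x = \<alpha> i * (kdelta (int (\<tau> (k - int i) x) - int i) - p i) * u (k - int i) x"
  by (simp add: dsig_def omega_def)

lemma dsig_L2_past:
  assumes "i \<le> \<tau>bar" and "k - int i < n"
  shows "L2_in M (past n) (dsig \<alpha> p \<tau>bar \<tau> u i k)"
proof -
  have "L2_in M (past n) (\<lambda>x. (\<alpha> i * (kdelta (int (\<tau> (k - int i) x) - int i) - p i)) * u (k - int i) x)"
  proof (rule L2_in_bounded_mult[OF subalgebra_past])
    show "(\<lambda>x. \<alpha> i * (kdelta (int (\<tau> (k - int i) x) - int i) - p i)) \<in> borel_measurable (past n)"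
      using delay_measurable_past[OF \<open>k - int i < n\<close>] by simp
    show "\<bar>\<alpha> i * (kdelta (int (\<tau> (k - int i) x) - int i) - p i)\<bar> \<le> \<bar>\<alpha> i\<bar> * (1 + \<bar>p i\<bar>)"
      for x
      unfolding abs_mult by (intro mult_left_mono kdelta_bounded) auto
    show "L2_in M (past n) (u (k - int i))"
      using \<open>k - int i < n\<close> by (intro L2_in_subalgebra[OF subalgebra_past_mono control_L2_past]) simp
  qed
  then show ?thesis
    using \<open>i \<le> \<tau>bar\<close> by (simp add: dsig_def[abs_def] omega_def)
qed

lemma integral_dsig_mult_lagged:
  assumes i: "i1 \<le> \<tau>bar" "i2 \<le> \<tau>bar" and lag: "k1 - int i1 < k2 - int i2"
  shows "(\<integral>x. dsig \<alpha> p \<tau>bar \<tau> u i1 k1 x * dsig \<alpha> p \<tau>bar \<tau> u i2 k2 x \<partial>M) = 0"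
proof -
  define n where "n = k2 - int i2"
  define Y where "Y = (\<lambda>x. dsig \<alpha> p \<tau>bar \<tau> u i1 k1 x * (\<alpha> i2 * u n x))"
  have d1: "L2_in M (past n) (dsig \<alpha> p \<tau>bar \<tau> u i1 k1)"
    using dsig_L2_past[OF i(1)] lag by (simp add: n_def)
  have u2: "L2_in M (past n) (\<lambda>x. \<alpha> i2 * u n x)"
    using L2_in_cmult[OF subalgebra_past control_L2_past] .
  have Y: "Y \<in> borel_measurable (past n)" "integrable M Y"
    using d1 u2 integrable_mult_L2_in[OF subalgebra_past d1 u2]
    by (auto simp: Y_def L2_in_def intro!: borel_measurable_times)
  have "(\<integral>x. dsig \<alpha> p \<tau>bar \<tau> u i1 k1 x * dsig \<alpha> p \<tau>bar \<tau> u i2 k2 x \<partial>M)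
      = (\<integral>x. (kdelta (int (\<tau> n x) - int i2) - p i2) * Y x \<partial>M)"
    using i(2) by (simp add: dsig_eq Y_def n_def mult_ac)
  also have "\<dots> = (\<integral>x. kdelta (int (\<tau> n x) - int i2) - p i2 \<partial>M) * integral\<^sup>L M Y"
    by (rule integral_delay_mult_past[OF kdelta_bounded Y])
  also have "\<dots> = 0"
    using expectation_centered_kdelta[OF delay_measurable delay_distribution[OF i(2)]] by simp
  finally show ?thesis .
qed

lemma integral_dsig_mult_aligned:
  assumes i: "i1 \<le> \<tau>bar" "i2 \<le> \<tau>bar" and aligned: "k1 - int i1 = k2 - int i2"
  shows "(\<integral>x. dsig \<alpha> p \<tau>bar \<tau> u i1 k1 x * dsig \<alpha> p \<tau>bar \<tau> u i2 k2 x \<partial>M)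
    = \<alpha> i1 * \<alpha> i2 * (if i1 = i2 then p i1 * (1 - p i1) else - p i1 * p i2)
      * (\<integral>x. (u (k1 - int i1) x)\<^sup>2 \<partial>M)"
proof -
  define n where "n = k1 - int i1"
  define Y where "Y = (\<lambda>x. \<alpha> i1 * \<alpha> i2 * (u n x)\<^sup>2)"
  let ?h = "\<lambda>t. (kdelta (int t - int i1) - p i1) * (kdelta (int t - int i2) - p i2)"
  have "L2_in M (past n) (u n)"
    by (rule control_L2_past)
  then have Y: "Y \<in> borel_measurable (past n)" "integrable M Y"
    by (auto simp: Y_def L2_in_def)
  have h: "\<bar>?h t\<bar> \<le> (1 + \<bar>p i1\<bar>) * (1 + \<bar>p i2\<bar>)" for t
    unfolding abs_mult by (intro mult_mono kdelta_bounded) auto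
  have "(\<integral>x. dsig \<alpha> p \<tau>bar \<tau> u i1 k1 x * dsig \<alpha> p \<tau>bar \<tau> u i2 k2 x \<partial>M)
      = (\<integral>x. ?h (\<tau> n x) * Y x \<partial>M)"
    using i aligned by (simp add: dsig_eq Y_def n_def power2_eq_square mult_ac)
  also have "\<dots> = (\<integral>x. ?h (\<tau> n x) \<partial>M) * integral\<^sup>L M Y"
    by (rule integral_delay_mult_past[OF h Y])
  also have "\<dots> = (if i1 = i2 then p i1 * (1 - p i1) else - p i1 * p i2) * integral\<^sup>L M Y"
    using covariance_kdelta[OF delay_measurable delay_distribution[OF i(1)] delay_distribution[OF i(2)]]
    by simp
  finally show ?thesis
    by (simp add: Y_def n_def mult_ac)
qed

lemma integral_dsig_mult:
  assumes i: "i1 \<le> \<tau>bar" "i2 \<le> \<tau>bar"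
  shows "(\<integral>x. dsig \<alpha> p \<tau>bar \<tau> u i1 k1 x * dsig \<alpha> p \<tau>bar \<tau> u i2 k2 x \<partial>M)
    = kdelta (k1 - int i1 - k2 + int i2) * \<alpha> i1 * \<alpha> i2
      * (if i1 = i2 then p i1 * (1 - p i1) else - p i1 * p i2) * (\<integral>x. (u (k1 - int i1) x)\<^sup>2 \<partial>M)"
proof (cases rule: linorder_cases[of "k1 - int i1" "k2 - int i2"])
  case less
  then show ?thesis
    using integral_dsig_mult_lagged[OF i] by (simp add: kdelta_def)
next
  case equal
  then show ?thesis
    using integral_dsig_mult_aligned[OF i] by (simp add: kdelta_def)
next
  case greater
  then show ?thesis
    using integral_dsig_mult_lagged[OF i(2,1) greater] by (simp add: kdelta_def mult.commute)
qed

end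

theorem lemma3p4:
  fixes M :: "'a measure" and \<tau>bar :: nat and p \<alpha> :: "nat \<Rightarrow> real"
    and \<tau> :: "int \<Rightarrow> 'a \<Rightarrow> nat" and v u y ud :: "int \<Rightarrow> 'a \<Rightarrow> real"
    and nP nK :: nat and aP bP aK bK :: "nat \<Rightarrow> real"
  assumes M: "prob_space M"
    and taubar: "\<tau>bar \<ge> 1"
    \<comment> \<open>A1: i.i.d. delays on {0..taubar} with Pr{tau_n = i} = p_i\<close>
    and tau_meas: "\<And>n. \<tau> n \<in> measurable M (count_space UNIV)"
    and tau_indep: "prob_space.indep_vars M (\<lambda>_. count_space UNIV) \<tau> UNIV"
    and tau_dist: "\<And>n i. i \<le> \<tau>bar \<Longrightarrow> measure M {x \<in> space M. \<tau> n x = i} = p i"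
    and p_sum: "(\<Sum>i\<le>\<tau>bar. p i) = 1"
    \<comment> \<open>A2: external input independent of the delay process\<close>
    and v_meas: "\<And>n. v n \<in> borel_measurable M"
    and v_indep: "prob_space.indep_set M
        (gen_events M \<tau> (\<lambda>_. count_space UNIV))
        (gen_events M v (\<lambda>_. borel))"
    and v_sq: "\<And>n. integrable M (\<lambda>x. (v n x)\<^sup>2)"
    \<comment> \<open>system at rest at time 0\<close>
    and v_rest: "\<And>n x. n < 0 \<Longrightarrow> v n x = 0"
    and u_rest: "\<And>n x. n < 0 \<Longrightarrow> u n x = 0"
    and y_rest: "\<And>n x. n < 0 \<Longrightarrow> y n x = 0"
    \<comment> \<open>receiver\<close>
    and receiver: "\<And>k x. ud k x =
        (\<Sum>i\<le>\<tau>bar. \<alpha> i * kdelta (int (\<tau> (k - int i) x) - int i) * u (k - int i) x)"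
    \<comment> \<open>strictly proper LTI plant with input v + ud\<close>
    and plant: "\<And>k x. 0 \<le> k \<Longrightarrow> y k x =
        (\<Sum>j\<in>{1..nP}. aP j * y (k - int j) x)
        + (\<Sum>j\<in>{1..nP}. bP j * (v (k - int j) x + ud (k - int j) x))"
    \<comment> \<open>proper LTI controller u = K y\<close>
    and controller: "\<And>k x. 0 \<le> k \<Longrightarrow> u k x =
        (\<Sum>j\<in>{1..nK}. aK j * u (k - int j) x)
        + (\<Sum>j\<le>nK. bK j * y (k - int j) x)"
  shows "(\<forall>(k1::nat) (k2::nat) i. i \<le> \<tau>bar \<longrightarrow>
            integral\<^sup>L M (\<lambda>x. dsig \<alpha> p \<tau>bar \<tau> u i (int k1) x * dsig \<alpha> p \<tau>bar \<tau> u i (int k2) x)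
            = kdelta (int k1 - int k2) * (\<alpha> i)\<^sup>2 * p i * (1 - p i)
              * integral\<^sup>L M (\<lambda>x. (u (int k1 - int i) x)\<^sup>2))
      \<and> (\<forall>(k1::nat) (k2::nat) i1 i2. i1 \<le> \<tau>bar \<longrightarrow> i2 \<le> \<tau>bar \<longrightarrow> i1 \<noteq> i2 \<longrightarrow>
            integral\<^sup>L M (\<lambda>x. dsig \<alpha> p \<tau>bar \<tau> u i1 (int k1) x * dsig \<alpha> p \<tau>bar \<tau> u i2 (int k2) x)
            = - kdelta (int k1 - int i1 - int k2 + int i2) * \<alpha> i1 * \<alpha> i2 * p i1 * p i2
              * integral\<^sup>L M (\<lambda>x. (u (int k1 - int i1) x)\<^sup>2))"
proof -
  interpret networked_loop M \<tau> v \<tau>bar \<alpha> p u y ud nP nK aP bP aK bK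
    by (intro networked_loop.intro delays_indep_input.intro delays_indep_input_axioms.intro
        networked_loop_axioms.intro M tau_indep v_indep tau_dist v_sq u_rest y_rest receiver plant controller)
  show ?thesis
    using integral_dsig_mult by (auto simp: power2_eq_square algebra_simps)
qed

end
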